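(* Let $w\in\mathbb{R}^n$, $w\ge0$. The set of all bilevel feasible decompositions of $w$ is convex.
   Context: Multi-commodity network pricing setting: $G=(\mathcal{V},\mathcal{A})$ directed graph with arc costs $c\ge0$, nonempty tolled arc set $\mathcal{A}_1\subsetneq\mathcal{A}$, $n=|\mathcal{A}_1|$, $N$ node–arc incidence matrix; finite set $\mathcal{K}$ of commodities, commodity $k$ having origin $o^k$ and destination $d^k$ connected by a path of arcs not in $\mathcal{A}_1$; $b^k_{o^k}=1$, $b^k_{d^k}=-1$, other entries $0$; $\mathcal{X}^k=\{x\in\mathbb{R}^{\mathcal{A}}: Nx=b^k,\ x\ge0\}$; $x_{\mathcal{A}_1}$ is the restriction of $x$ to $\mathcal{A}_1$. For $t\in\mathbb{R}^n$ let $f^k(t)=\min\{c^\top x+t^\top x_{\mathcal{A}_1}: x\in\mathcal{X}^k\}$ if $t\ge0$, $-\infty$ otherwise; $f=\sum_k f^k$; $g^k(w)=\sup_t\{f^k(t)-t^\top w\}$, $g(w)=\sup_t\{f(t)-t^\top w\}$. A decomposition of $w$ is a tuple $(w^k)_{k\in\mathcal{K}}$ of vectors $w^k\in\mathbb{R}^n$, $w^k\ge0$, with $\sum_{k}w^k=w$; it is bilevel feasible if $g(w)=\sum_{k\in\mathcal{K}}g^k(w^k)$. *)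

theory Defs
  imports "HOL-Analysis.Analysis" "HOL-Library.Extended_Real"
begin

text \<open>Arcs form a finite type 'a, nodes a finite type 'v,
  commodities a finite type 'k. Vectors indexed by the
  tolled arc set A1 (i.e. elements of R^n) are represented as vectors in real^'a whose
  entries outside A1 are zero (for w and decompositions) or ignored (for tolls t).\<close>

fun is_walk :: "('a \<Rightarrow> 'v) \<Rightarrow> ('a \<Rightarrow> 'v) \<Rightarrow> 'v \<Rightarrow> 'a list \<Rightarrow> 'v \<Rightarrow> bool" where
  "is_walk src tgt u [] v = (u = v)"
| "is_walk src tgt u (a # as) v = (src a = u \<and> is_walk src tgt (tgt a) as v)"

definition incidence :: "('a::finite \<Rightarrow> 'v::finite) \<Rightarrow> ('a \<Rightarrow> 'v) \<Rightarrow> real ^ 'a ^ 'v" where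
  "incidence src tgt = (\<chi> v a. (if v = src a then 1 else 0) - (if v = tgt a then 1 else 0))"

definition demand :: "'v::finite \<Rightarrow> 'v \<Rightarrow> real ^ 'v" where
  "demand o' d = (\<chi> v. if v = o' then 1 else if v = d then -1 else 0)"

definition flows :: "('a::finite \<Rightarrow> 'v::finite) \<Rightarrow> ('a \<Rightarrow> 'v) \<Rightarrow> 'v \<Rightarrow> 'v \<Rightarrow> (real ^ 'a) set" where
  "flows src tgt o' d = {x. incidence src tgt *v x = demand o' d \<and> (\<forall>a. 0 \<le> x $ a)}"

definition tollsum :: "'a::finite set \<Rightarrow> real ^ 'a \<Rightarrow> real ^ 'a \<Rightarrow> real" where
  "tollsum A1 t x = (\<Sum>a\<in>A1. t $ a * x $ a)"

definition fk :: "('a::finite \<Rightarrow> 'v::finite) \<Rightarrow> ('a \<Rightarrow> 'v) \<Rightarrow> real ^ 'a \<Rightarrow> 'a set \<Rightarrow> 'v \<Rightarrow> 'v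
                   \<Rightarrow> real ^ 'a \<Rightarrow> ereal" where
  "fk src tgt c A1 o' d t =
     (if \<forall>a\<in>A1. 0 \<le> t $ a
      then Inf ((\<lambda>x. ereal (c \<bullet> x + tollsum A1 t x)) ` flows src tgt o' d)
      else -\<infinity>)"

definition ftot :: "('a::finite \<Rightarrow> 'v::finite) \<Rightarrow> ('a \<Rightarrow> 'v) \<Rightarrow> real ^ 'a \<Rightarrow> 'a set \<Rightarrow> ('k::finite \<Rightarrow> 'v)
                   \<Rightarrow> ('k \<Rightarrow> 'v) \<Rightarrow> real ^ 'a \<Rightarrow> ereal" where
  "ftot src tgt c A1 orig dest t = (\<Sum>k\<in>UNIV. fk src tgt c A1 (orig k) (dest k) t)"

definition gk :: "('a::finite \<Rightarrow> 'v::finite) \<Rightarrow> ('a \<Rightarrow> 'v) \<Rightarrow> real ^ 'a \<Rightarrow> 'a set \<Rightarrow> 'v \<Rightarrow> 'v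
                   \<Rightarrow> real ^ 'a \<Rightarrow> ereal" where
  "gk src tgt c A1 o' d w = (SUP t. fk src tgt c A1 o' d t - ereal (tollsum A1 t w))"

definition gtot :: "('a::finite \<Rightarrow> 'v::finite) \<Rightarrow> ('a \<Rightarrow> 'v) \<Rightarrow> real ^ 'a \<Rightarrow> 'a set \<Rightarrow> ('k::finite \<Rightarrow> 'v)
                   \<Rightarrow> ('k \<Rightarrow> 'v) \<Rightarrow> real ^ 'a \<Rightarrow> ereal" where
  "gtot src tgt c A1 orig dest w = (SUP t. ftot src tgt c A1 orig dest t - ereal (tollsum A1 t w))"

definition decomposition :: "'a::finite set \<Rightarrow> real ^ 'a \<Rightarrow> real ^ 'a ^ 'k::finite \<Rightarrow> bool" where
  "decomposition A1 w W \<longleftrightarrow>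
     (\<forall>k. \<forall>a\<in>A1. 0 \<le> W $ k $ a) \<and> (\<forall>k. \<forall>a. a \<notin> A1 \<longrightarrow> W $ k $ a = 0) \<and>
     (\<forall>a\<in>A1. (\<Sum>k\<in>UNIV. W $ k $ a) = w $ a)"

definition bilevel_feasible :: "('a::finite \<Rightarrow> 'v::finite) \<Rightarrow> ('a \<Rightarrow> 'v) \<Rightarrow> real ^ 'a \<Rightarrow> 'a set
      \<Rightarrow> ('k::finite \<Rightarrow> 'v) \<Rightarrow> ('k \<Rightarrow> 'v) \<Rightarrow> real ^ 'a \<Rightarrow> real ^ 'a ^ 'k \<Rightarrow> bool" where
  "bilevel_feasible src tgt c A1 orig dest w W \<longleftrightarrow>
     decomposition A1 w W \<and>
     gtot src tgt c A1 orig dest w = (\<Sum>k\<in>UNIV. gk src tgt c A1 (orig k) (dest k) (W $ k))"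

end

theory Submission
  imports Defs
begin

text \<open>Each \<open>g\<^sup>k\<close> is convex, being a supremum of affine functions of \<open>w\<^sup>k\<close>, and splitting
  \<open>t\<^sup>T w = \<Sum>\<^sub>k t\<^sup>T w\<^sup>k\<close> gives the weak-duality bound \<open>g(w) \<le> \<Sum>\<^sub>k g\<^sup>k(w\<^sup>k)\<close> for every decomposition.
  Hence the bilevel feasible decompositions are the points of the convex set of decompositions
  where the convex function \<open>\<Sum>\<^sub>k g\<^sup>k(w\<^sup>k)\<close> is at most the constant \<open>g(w)\<close>: a sublevel set, so
  convex. None of the network structure (costs, paths, the tolled arc set) is needed.\<close>

lemma ereal_minus_convex_combination:
  assumes "0 < u" "0 < v" "u + v = 1"
  shows "(x::ereal) - ereal (u * a + v * b) = ereal u * (x - ereal a) + ereal v * (x - ereal b)"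
  using assms by (cases x) (auto simp: algebra_simps simp flip: distrib_left)

lemma ereal_convex_combination_self:
  assumes "0 < u" "0 < v" "u + v = 1"
  shows "ereal u * (x::ereal) + ereal v * x = x"
  using assms by (cases x) (auto simp flip: distrib_right)

lemma sum_minus_ereal: "(\<Sum>k\<in>K. f k) - ereal (\<Sum>k\<in>K. r k) = (\<Sum>k\<in>K. f k - ereal (r k))"
proof -
  have minus_as_plus: "a - ereal b = a + ereal (- b)" for a :: ereal and b
    by (cases a) auto
  show ?thesis
    unfolding minus_as_plus by (simp add: sum.distrib sum_negf)
qed

lemma SUP_minus_linear_convex_combination_le:
  fixes f :: "'b \<Rightarrow> ereal" and p :: "'b \<Rightarrow> 'c::real_vector \<Rightarrow> real"
  assumes p: "\<And>t. linear (p t)" and uv: "0 < u" "0 < v" "u + v = 1"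
  shows "(SUP t. f t - ereal (p t (u *\<^sub>R x + v *\<^sub>R y)))
    \<le> ereal u * (SUP t. f t - ereal (p t x)) + ereal v * (SUP t. f t - ereal (p t y))"
proof (rule SUP_least)
  fix t
  have "f t - ereal (p t (u *\<^sub>R x + v *\<^sub>R y))
      = ereal u * (f t - ereal (p t x)) + ereal v * (f t - ereal (p t y))"
    using ereal_minus_convex_combination[OF uv]
    by (simp add: real_vector.linear_add[OF p] real_vector.linear_scale[OF p])
  also have "\<dots> \<le> ereal u * (SUP t. f t - ereal (p t x)) + ereal v * (SUP t. f t - ereal (p t y))"
    using uv by (intro add_mono ereal_mult_left_mono SUP_upper) auto
  finally show "f t - ereal (p t (u *\<^sub>R x + v *\<^sub>R y)) \<le> \<dots>" .
qed

lemma SUP_sum_minus_linear_le: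
  fixes f :: "'k \<Rightarrow> 'b \<Rightarrow> ereal" and p :: "'b \<Rightarrow> 'c::real_vector \<Rightarrow> real"
  assumes p: "\<And>t. linear (p t)"
  shows "(SUP t. (\<Sum>k\<in>K. f k t) - ereal (p t (\<Sum>k\<in>K. x k)))
    \<le> (\<Sum>k\<in>K. SUP t. f k t - ereal (p t (x k)))"
proof (rule SUP_least)
  fix t
  have "(\<Sum>k\<in>K. f k t) - ereal (p t (\<Sum>k\<in>K. x k)) = (\<Sum>k\<in>K. f k t - ereal (p t (x k)))"
    by (simp add: real_vector.linear_sum[OF p] sum_minus_ereal)
  also have "\<dots> \<le> (\<Sum>k\<in>K. SUP t. f k t - ereal (p t (x k)))"
    by (intro sum_mono SUP_upper) auto
  finally show "(\<Sum>k\<in>K. f k t) - ereal (p t (\<Sum>k\<in>K. x k)) \<le> \<dots>" .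
qed

lemma linear_tollsum: "linear (tollsum A1 t)"
proof (rule linearI)
  show "tollsum A1 t (x + y) = tollsum A1 t x + tollsum A1 t y" for x y
    by (simp add: tollsum_def distrib_left sum.distrib)
  show "tollsum A1 t (r *\<^sub>R x) = r *\<^sub>R tollsum A1 t x" for r x
    by (simp add: tollsum_def sum_distrib_left mult.left_commute)
qed

lemma tollsum_decomposition:
  assumes "decomposition A1 w W"
  shows "tollsum A1 t w = tollsum A1 t (\<Sum>k\<in>UNIV. W $ k)"
  using assms unfolding tollsum_def decomposition_def by simp

lemma gk_convex_combination_le:
  assumes "0 < u" "0 < v" "u + v = 1"
  shows "gk src tgt c A1 o' d (u *\<^sub>R x + v *\<^sub>R y)
    \<le> ereal u * gk src tgt c A1 o' d x + ereal v * gk src tgt c A1 o' d y"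
  unfolding gk_def
  by (rule SUP_minus_linear_convex_combination_le[where p = "tollsum A1", OF linear_tollsum assms])

lemma gtot_le_sum_gk:
  assumes "decomposition A1 w W"
  shows "gtot src tgt c A1 orig dest w \<le> (\<Sum>k\<in>UNIV. gk src tgt c A1 (orig k) (dest k) (W $ k))"
  unfolding gtot_def ftot_def gk_def tollsum_decomposition[OF assms]
  by (rule SUP_sum_minus_linear_le[where p = "tollsum A1", OF linear_tollsum])

lemma bilevel_feasible_iff_sum_gk_le:
  "bilevel_feasible src tgt c A1 orig dest w W \<longleftrightarrow>
     decomposition A1 w W \<and>
     (\<Sum>k\<in>UNIV. gk src tgt c A1 (orig k) (dest k) (W $ k)) \<le> gtot src tgt c A1 orig dest w"
  unfolding bilevel_feasible_def by (auto intro: order_antisym simp: gtot_le_sum_gk)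

lemma convex_decompositions: "convex {W. decomposition A1 w W}"
proof (rule convexI)
  fix W1 W2 :: "real ^ 'a ^ 'k" and u v :: real
  assume W1: "W1 \<in> {W. decomposition A1 w W}" and W2: "W2 \<in> {W. decomposition A1 w W}"
    and uv: "0 \<le> u" "0 \<le> v" "u + v = 1"
  have "(\<Sum>k\<in>UNIV. (u *\<^sub>R W1 + v *\<^sub>R W2) $ k $ a) = w $ a" if "a \<in> A1" for a
  proof -
    have "(\<Sum>k\<in>UNIV. (u *\<^sub>R W1 + v *\<^sub>R W2) $ k $ a)
        = u * (\<Sum>k\<in>UNIV. W1 $ k $ a) + v * (\<Sum>k\<in>UNIV. W2 $ k $ a)"
      by (simp add: sum.distrib sum_distrib_left)
    also have "\<dots> = (u + v) * w $ a"
      using W1 W2 that unfolding decomposition_def by (simp add: distrib_right)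
    finally show ?thesis using uv by simp
  qed
  then show "u *\<^sub>R W1 + v *\<^sub>R W2 \<in> {W. decomposition A1 w W}"
    using W1 W2 uv unfolding decomposition_def by simp
qed

lemma sum_gk_convex_combination_le:
  assumes uv: "0 < u" "0 < v" "u + v = 1"
  shows "(\<Sum>k\<in>UNIV. gk src tgt c A1 (orig k) (dest k) ((u *\<^sub>R W1 + v *\<^sub>R W2) $ k))
    \<le> ereal u * (\<Sum>k\<in>UNIV. gk src tgt c A1 (orig k) (dest k) (W1 $ k))
      + ereal v * (\<Sum>k\<in>UNIV. gk src tgt c A1 (orig k) (dest k) (W2 $ k))"
proof -
  have scale: "ereal r * (\<Sum>k\<in>UNIV. g k) = (\<Sum>k\<in>UNIV. ereal r * g k)" if "0 < r" for r g
    using sum_distrib_right_ereal[of r g UNIV] that by (simp add: mult.commute)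
  show ?thesis
    unfolding scale[OF uv(1)] scale[OF uv(2)] sum.distrib[symmetric]
    by (intro sum_mono) (simp add: gk_convex_combination_le[OF uv])
qed

theorem lemma6:
  fixes src tgt :: "'a::finite \<Rightarrow> 'v::finite"
    and c :: "real ^ 'a" and A1 :: "'a set"
    and orig dest :: "'k::finite \<Rightarrow> 'v"
    and w :: "real ^ 'a"
  assumes c_nonneg: "\<forall>a. 0 \<le> c $ a"
    and A1_ne: "A1 \<noteq> {}" and A1_proper: "A1 \<noteq> UNIV"
    and od_distinct: "\<forall>k. orig k \<noteq> dest k"
    and toll_free_path: "\<forall>k. \<exists>p. is_walk src tgt (orig k) p (dest k) \<and> (\<forall>a\<in>set p. a \<notin> A1)"
    and w_nonneg: "\<forall>a\<in>A1. 0 \<le> w $ a"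
    and w_outside: "\<forall>a. a \<notin> A1 \<longrightarrow> w $ a = 0"
  shows "convex {W :: real ^ 'a ^ 'k. bilevel_feasible src tgt c A1 orig dest w W}"
proof (rule convexI)
  let ?G = "gtot src tgt c A1 orig dest w"
  let ?h = "\<lambda>W. \<Sum>k\<in>UNIV. gk src tgt c A1 (orig k) (dest k) (W $ k)"
  fix W1 W2 :: "real ^ 'a ^ 'k" and u v :: real
  assume W1: "W1 \<in> {W. bilevel_feasible src tgt c A1 orig dest w W}"
    and W2: "W2 \<in> {W. bilevel_feasible src tgt c A1 orig dest w W}"
    and uv: "0 \<le> u" "0 \<le> v" "u + v = 1"
  show "u *\<^sub>R W1 + v *\<^sub>R W2 \<in> {W. bilevel_feasible src tgt c A1 orig dest w W}"
  proof (cases "u = 0 \<or> v = 0")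
    case True
    then show ?thesis using W1 W2 uv by auto
  next
    case False
    \<comment> \<open>weights must be positive here, since \<open>ereal 0 * \<infinity> = 0\<close>\<close>
    with uv have uv': "0 < u" "0 < v" "u + v = 1" by auto
    have decomp: "decomposition A1 w (u *\<^sub>R W1 + v *\<^sub>R W2)"
      using W1 W2 uv convex_decompositions[unfolded convex_def]
      unfolding bilevel_feasible_def by blast
    have "?h (u *\<^sub>R W1 + v *\<^sub>R W2) \<le> ereal u * ?h W1 + ereal v * ?h W2"
      by (rule sum_gk_convex_combination_le[OF uv'])
    also have "\<dots> \<le> ereal u * ?G + ereal v * ?G"
      using W1 W2 uv unfolding bilevel_feasible_iff_sum_gk_le
      by (intro add_mono ereal_mult_left_mono) auto
    also have "\<dots> = ?G"
      by (rule ereal_convex_combination_self[OF uv'])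
    finally show ?thesis
      using decomp unfolding bilevel_feasible_iff_sum_gk_le by simp
  qed
qed

end
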